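(* Let $\varphi$ be a propositional (Boolean) formula and let $W$ be a set of valuations. Then for every $w\in W$: $w\models\varphi$ if and only if $w\models\bigvee_{v\in\mathrm{base}(\varphi,W)}\bigwedge_{\ell\in v}\ell$.
   Context: Fix a set $\mathrm{Prop}$ of propositional atoms; a literal is $p$ or $\neg p$ for $p\in\mathrm{Prop}$. A valuation is a maximal consistent set of literals (identified with a truth assignment); $w\models\varphi$ means the valuation $w$ satisfies the Boolean formula $\varphi$. A subvaluation is a subset of a valuation. An atom $p$ is essential to $\varphi$ iff $p$ occurs in every formula classically equivalent to $\varphi$. Given a set $W$ of valuations, a subvaluation $v$ satisfies $\varphi$ modulo $W$ iff every $u\in W$ with $v\subseteq u$ satisfies $\varphi$; $v$ essentially satisfies $\varphi$ modulo $W$ iff it satisfies $\varphi$ modulo $W$ and every atom occurring (positively or negatively) in a literal of $v$ is essential to $\varphi$; $v$ is a prime subvaluation of $\varphi$ modulo $W$ iff $v$ essentially satisfies $\varphi$ modulo $W$ and no proper subset of $v$ does. $\mathrm{base}(\varphi,W)$ denotes the set of all prime subvaluations of $\varphi$ modulo $W$. *)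

theory Defs
  imports Main
begin

datatype 'a lit = Pos 'a | Neg 'a

datatype 'a form =
    Atom 'a | Top | Bot | Not "'a form"
  | And "'a form" "'a form" | Or "'a form" "'a form"
  | Imp "'a form" "'a form" | Iff "'a form" "'a form"

fun lit_atom :: "'a lit \<Rightarrow> 'a" where
  "lit_atom (Pos p) = p" | "lit_atom (Neg p) = p"

fun atoms :: "'a form \<Rightarrow> 'a set" where
  "atoms (Atom p) = {p}"
| "atoms Top = {}"
| "atoms Bot = {}"
| "atoms (Not f) = atoms f"
| "atoms (And f g) = atoms f \<union> atoms g"
| "atoms (Or f g) = atoms f \<union> atoms g"
| "atoms (Imp f g) = atoms f \<union> atoms g"
| "atoms (Iff f g) = atoms f \<union> atoms g"

definition consistent :: "'a lit set \<Rightarrow> bool" where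
  "consistent v \<longleftrightarrow> (\<forall>p. \<not> (Pos p \<in> v \<and> Neg p \<in> v))"

definition valuation :: "'a lit set \<Rightarrow> bool" where
  "valuation w \<longleftrightarrow> consistent w \<and> (\<forall>p. Pos p \<in> w \<or> Neg p \<in> w)"

definition subvaluation :: "'a lit set \<Rightarrow> bool" where
  "subvaluation v \<longleftrightarrow> (\<exists>w. valuation w \<and> v \<subseteq> w)"

fun sat :: "'a lit set \<Rightarrow> 'a form \<Rightarrow> bool" where
  "sat w (Atom p) = (Pos p \<in> w)"
| "sat w Top = True"
| "sat w Bot = False"
| "sat w (Not f) = (\<not> sat w f)"
| "sat w (And f g) = (sat w f \<and> sat w g)"
| "sat w (Or f g) = (sat w f \<or> sat w g)"
| "sat w (Imp f g) = (sat w f \<longrightarrow> sat w g)"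
| "sat w (Iff f g) = (sat w f \<longleftrightarrow> sat w g)"

fun sat_lit :: "'a lit set \<Rightarrow> 'a lit \<Rightarrow> bool" where
  "sat_lit w (Pos p) = sat w (Atom p)"
| "sat_lit w (Neg p) = sat w (Not (Atom p))"

definition equivalent :: "'a form \<Rightarrow> 'a form \<Rightarrow> bool" where
  "equivalent f g \<longleftrightarrow> (\<forall>w. valuation w \<longrightarrow> (sat w f \<longleftrightarrow> sat w g))"

definition essential :: "'a \<Rightarrow> 'a form \<Rightarrow> bool" where
  "essential p f \<longleftrightarrow> (\<forall>g. equivalent f g \<longrightarrow> p \<in> atoms g)"

definition sat_mod :: "'a lit set \<Rightarrow> 'a form \<Rightarrow> 'a lit set set \<Rightarrow> bool" where
  "sat_mod v f W \<longleftrightarrow> (\<forall>u\<in>W. v \<subseteq> u \<longrightarrow> sat u f)"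

definition ess_sat_mod :: "'a lit set \<Rightarrow> 'a form \<Rightarrow> 'a lit set set \<Rightarrow> bool" where
  "ess_sat_mod v f W \<longleftrightarrow> sat_mod v f W \<and> (\<forall>l\<in>v. essential (lit_atom l) f)"

definition prime_subval :: "'a lit set \<Rightarrow> 'a form \<Rightarrow> 'a lit set set \<Rightarrow> bool" where
  "prime_subval v f W \<longleftrightarrow> subvaluation v \<and> ess_sat_mod v f W
     \<and> (\<forall>v'. v' \<subset> v \<longrightarrow> \<not> ess_sat_mod v' f W)"

definition base :: "'a form \<Rightarrow> 'a lit set set \<Rightarrow> 'a lit set set" where
  "base f W = {v. prime_subval v f W}"

end

theory Submission
  imports Defs
begin

text \<open>
  A valuation satisfying \<open>\<phi>\<close> is already forced by its literals over essential atoms: a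
  non-essential atom can be removed from an equivalent formula, so flipping it never changes
  the truth value of \<open>\<phi>\<close>, and the essential atoms are finitely many. Hence the essential part
  of \<open>w\<close> essentially satisfies \<open>\<phi>\<close> modulo \<open>W\<close>, and a minimal subset of it with this property
  is a prime subvaluation contained in \<open>w\<close>. Conversely, every prime subvaluation contained
  in \<open>w \<in> W\<close> forces \<open>w \<Turnstile> \<phi>\<close>.
\<close>

lemma finite_atoms: "finite (atoms f)"
  by (induction f) auto

lemma sat_cong_atoms:
  "\<forall>p\<in>atoms f. Pos p \<in> w \<longleftrightarrow> Pos p \<in> u \<Longrightarrow> sat w f = sat u f"
  by (induction f) auto

lemma essential_imp_mem_atoms: "essential p f \<Longrightarrow> p \<in> atoms f"
  unfolding essential_def equivalent_def by auto

lemma valuation_Neg_iff: "valuation w \<Longrightarrow> Neg p \<in> w \<longleftrightarrow> Pos p \<notin> w"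
  unfolding valuation_def consistent_def by metis

lemma sat_lit_iff_mem: "valuation w \<Longrightarrow> sat_lit w l \<longleftrightarrow> l \<in> w"
  by (cases l) (auto simp: valuation_Neg_iff)

definition assign :: "'a lit set \<Rightarrow> 'a \<Rightarrow> bool \<Rightarrow> 'a lit set" where
  "assign w p b = {l \<in> w. lit_atom l \<noteq> p} \<union> {if b then Pos p else Neg p}"

lemma Pos_mem_assign: "Pos q \<in> assign w p b \<longleftrightarrow> (if q = p then b else Pos q \<in> w)"
  unfolding assign_def by auto

lemma valuation_assign:
  assumes "valuation w"
  shows "valuation (assign w p b)"
proof -
  have "Pos q \<in> assign w p b \<longleftrightarrow> Neg q \<notin> assign w p b" for q
    using assms by (cases "q = p") (auto simp: assign_def valuation_Neg_iff)
  then show ?thesis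
    unfolding valuation_def consistent_def by blast
qed

lemma sat_assign_nonessential:
  assumes "\<not> essential p f" "valuation w"
  shows "sat (assign w p b) f = sat w f"
proof -
  obtain g where g: "equivalent f g" "p \<notin> atoms g"
    using assms(1) unfolding essential_def by auto
  have "sat (assign w p b) g = sat w g"
    by (rule sat_cong_atoms) (use g(2) in \<open>auto simp: Pos_mem_assign\<close>)
  with g(1) valuation_assign[OF assms(2)] assms(2) show ?thesis
    unfolding equivalent_def by auto
qed

lemma sat_cong_nonessential:
  assumes "finite S" "\<forall>p\<in>S. \<not> essential p f" "valuation w" "valuation u"
    "\<forall>p\<in>atoms f - S. Pos p \<in> w \<longleftrightarrow> Pos p \<in> u"
  shows "sat w f = sat u f"
  using assms
proof (induction S arbitrary: w rule: finite_induct)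
  case empty
  then show ?case by (intro sat_cong_atoms) simp
next
  case (insert p S)
  let ?w = "assign w p (Pos p \<in> u)"
  have "sat ?w f = sat u f"
    using insert.prems by (intro insert.IH) (auto simp: valuation_assign Pos_mem_assign)
  moreover have "sat ?w f = sat w f"
    using insert.prems by (intro sat_assign_nonessential) auto
  ultimately show ?case by simp
qed

lemma sat_cong_essential:
  assumes "valuation w" "valuation u"
    "\<forall>p. essential p f \<longrightarrow> (Pos p \<in> w \<longleftrightarrow> Pos p \<in> u)"
  shows "sat w f = sat u f"
  using assms finite_atoms[of f]
  by (intro sat_cong_nonessential[where S = "{p \<in> atoms f. \<not> essential p f}"]) auto

definition essential_part :: "'a lit set \<Rightarrow> 'a form \<Rightarrow> 'a lit set" where
  "essential_part w f = {l \<in> w. essential (lit_atom l) f}"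

lemma finite_essential_part: "finite (essential_part w f)"
proof -
  have "essential_part w f \<subseteq> Pos ` atoms f \<union> Neg ` atoms f"
  proof
    fix l assume "l \<in> essential_part w f"
    then have "lit_atom l \<in> atoms f"
      by (auto simp: essential_part_def essential_imp_mem_atoms)
    then show "l \<in> Pos ` atoms f \<union> Neg ` atoms f" by (cases l) auto
  qed
  then show ?thesis by (rule finite_subset) (simp add: finite_atoms)
qed

lemma ess_sat_mod_essential_part:
  assumes "\<forall>u\<in>W. valuation u" "valuation w" "sat w f"
  shows "ess_sat_mod (essential_part w f) f W"
  unfolding ess_sat_mod_def sat_mod_def
proof (intro conjI ballI impI)
  fix u assume u: "u \<in> W" and sub: "essential_part w f \<subseteq> u"
  have "valuation u" using assms(1) u by auto
  have "Pos p \<in> w \<longleftrightarrow> Pos p \<in> u" if "essential p f" for p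
  proof (cases "Pos p \<in> w")
    case True
    then show ?thesis using that sub by (auto simp: essential_part_def)
  next
    case False
    then have "Neg p \<in> u"
      using that sub valuation_Neg_iff[OF assms(2)] by (auto simp: essential_part_def)
    with False show ?thesis using valuation_Neg_iff[OF \<open>valuation u\<close>] by auto
  qed
  then show "sat u f"
    using sat_cong_essential[OF assms(2) \<open>valuation u\<close>] assms(3) by auto
qed (auto simp: essential_part_def)

lemma ess_sat_mod_imp_prime_subval:
  assumes "finite v" "v \<subseteq> w" "valuation w" "ess_sat_mod v f W"
  shows "\<exists>v'\<subseteq>v. prime_subval v' f W"
proof -
  let ?S = "{v'. v' \<subseteq> v \<and> ess_sat_mod v' f W}"
  have "finite ?S" using assms(1) by simp
  moreover have "v \<in> ?S" using assms(4) by simp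
  ultimately obtain v' where v': "v' \<in> ?S" and minimal: "\<forall>x\<in>?S. x \<subseteq> v' \<longrightarrow> v' = x"
    by (meson finite_has_minimal2)
  have "prime_subval v' f W"
    unfolding prime_subval_def
  proof (intro conjI allI impI)
    show "subvaluation v'"
      unfolding subvaluation_def using v' assms(2,3) by blast
    show "ess_sat_mod v' f W" using v' by simp
    fix x assume "x \<subset> v'"
    then show "\<not> ess_sat_mod x f W" using v' minimal by blast
  qed
  with v' show ?thesis by blast
qed

theorem theorem2:
  fixes \<phi> :: "'a form" and W :: "'a lit set set"
  assumes "\<forall>w\<in>W. valuation w"
  shows "\<forall>w\<in>W. sat w \<phi> \<longleftrightarrow> (\<exists>v\<in>base \<phi> W. \<forall>l\<in>v. sat_lit w l)"
proof (intro ballI iffI)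
  fix w assume w: "w \<in> W" and "sat w \<phi>"
  have "valuation w" using assms w by blast
  have "essential_part w \<phi> \<subseteq> w" by (auto simp: essential_part_def)
  then obtain v where v: "v \<subseteq> essential_part w \<phi>" "prime_subval v \<phi> W"
    using ess_sat_mod_imp_prime_subval[OF finite_essential_part _ \<open>valuation w\<close>
        ess_sat_mod_essential_part[OF assms \<open>valuation w\<close> \<open>sat w \<phi>\<close>]]
    by blast
  have "\<forall>l\<in>v. sat_lit w l"
    using v(1) \<open>essential_part w \<phi> \<subseteq> w\<close> sat_lit_iff_mem[OF \<open>valuation w\<close>] by blast
  with v(2) show "\<exists>v\<in>base \<phi> W. \<forall>l\<in>v. sat_lit w l"
    unfolding base_def by blast
next
  fix w assume w: "w \<in> W" and "\<exists>v\<in>base \<phi> W. \<forall>l\<in>v. sat_lit w l"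
  then obtain v where v: "prime_subval v \<phi> W" "\<forall>l\<in>v. sat_lit w l"
    unfolding base_def by blast
  have "valuation w" using assms w by blast
  with v(2) have "v \<subseteq> w" using sat_lit_iff_mem by blast
  moreover have "sat_mod v \<phi> W"
    using v(1) unfolding prime_subval_def ess_sat_mod_def by blast
  ultimately show "sat w \<phi>" using w unfolding sat_mod_def by blast
qed

end
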